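(* Let $S$ be an uncovered set of patterns and let $f_n$ denote the number of rooted labeled forests on $[n]$ avoiding $S$. Then $L_S=\lim_{n\to\infty}\frac{f_n^{1/n}}{n}$ equals $e^{-1}$ if and only if $S$ contains $12$ or $21$.
   Context: A rooted labeled forest on $[n]$ is an unordered forest on $n$ vertices, each component with a distinguished root, with distinct labels from $[n]$. A pattern of length $k$ is a permutation of $[k]$; an instance of it is a sequence of vertices $v_1,\dots,v_k$ with $v_i$ a strict ancestor of $v_{i+1}$ whose labels are in the same relative order as the pattern; a forest avoids $S$ if it contains no instance of any pattern in $S$. A set $S$ of patterns is covered if it contains a pattern $\pi$ of length $k$ with $\pi(1)=1$ and a pattern $\sigma$ of length $\ell$ with $\sigma(1)=\ell$; otherwise $S$ is uncovered. *)

theory Defs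
  imports Complex_Main
begin

text \<open>A rooted labeled forest on [n] = {1..n} is encoded by its parent function
  p :: nat => nat: p v = 0 means v is a root; p v is the parent of v otherwise.
  Outside [n] the function is 0, so each forest has a unique encoding.\<close>

definition parent_rel :: "nat \<Rightarrow> (nat \<Rightarrow> nat) \<Rightarrow> (nat \<times> nat) set" where
  "parent_rel n p = {(v, p v) | v. v \<in> {1..n} \<and> p v \<noteq> 0}"

definition rooted_forest :: "nat \<Rightarrow> (nat \<Rightarrow> nat) \<Rightarrow> bool" where
  "rooted_forest n p \<longleftrightarrow>
     (\<forall>v. v \<notin> {1..n} \<longrightarrow> p v = 0) \<and>
     (\<forall>v \<in> {1..n}. p v \<le> n) \<and>
     (\<forall>v. (v, v) \<notin> (parent_rel n p)\<^sup>+)"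

definition strict_ancestor :: "nat \<Rightarrow> (nat \<Rightarrow> nat) \<Rightarrow> nat \<Rightarrow> nat \<Rightarrow> bool" where
  "strict_ancestor n p a v \<longleftrightarrow> (v, a) \<in> (parent_rel n p)\<^sup>+"

definition is_pattern :: "nat list \<Rightarrow> bool" where
  "is_pattern \<pi> \<longleftrightarrow> \<pi> \<noteq> [] \<and> distinct \<pi> \<and> set \<pi> = {1..length \<pi>}"

definition is_instance :: "nat \<Rightarrow> (nat \<Rightarrow> nat) \<Rightarrow> nat list \<Rightarrow> nat list \<Rightarrow> bool" where
  "is_instance n p \<pi> vs \<longleftrightarrow>
     length vs = length \<pi> \<and>
     (\<forall>i. Suc i < length vs \<longrightarrow> strict_ancestor n p (vs ! i) (vs ! Suc i)) \<and>
     (\<forall>i < length vs. \<forall>j < length vs. vs ! i < vs ! j \<longleftrightarrow> \<pi> ! i < \<pi> ! j)"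

definition forest_avoids :: "nat \<Rightarrow> (nat \<Rightarrow> nat) \<Rightarrow> nat list set \<Rightarrow> bool" where
  "forest_avoids n p S \<longleftrightarrow> (\<forall>\<pi> \<in> S. \<not> (\<exists>vs. is_instance n p \<pi> vs))"

definition covered :: "nat list set \<Rightarrow> bool" where
  "covered S \<longleftrightarrow> (\<exists>\<pi> \<in> S. hd \<pi> = 1) \<and> (\<exists>\<sigma> \<in> S. hd \<sigma> = length \<sigma>)"

definition num_avoiding :: "nat list set \<Rightarrow> nat \<Rightarrow> nat" where
  "num_avoiding S n = card {p. rooted_forest n p \<and> forest_avoids n p S}"

end

theory Submission
  imports Defs "HOL-Library.FuncSet"
begin

text \<open>If S contains 12, then, being uncovered, it contains no pattern that starts with its
  maximum, so the forests avoiding S are exactly those in which every parent is larger than its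
  children. There are n! of these, and (n!)^(1/n)/n tends to 1/e. Symmetrically for 21.

  Otherwise every pattern of S has length at least 3 and, say, none of them starts with its
  minimum. Then S is avoided by every forest in which the top x of each ancestor chain
  x > y > z is smaller than y and z. Splitting off the least label shows that the number f(m)
  of such forests on m labels satisfies
  f(m+1) \<ge> \<Sum>k\<le>m. (m choose k) f(k) f(m-k) + m f(m-1), which forces f(n) \<ge> n! (11/10)^n,
  so the limit is at least 1.1/e.

  The two mirror-image cases are treated at once by a parameter lt that is either (<) or (>).\<close>

section \<open>The growth of n!\<close>

lemma one_plus_inverse_power_le_exp: "(1 + 1 / real n) ^ n \<le> exp 1"
proof -
  have "(1 + 1 / real n) ^ n \<le> exp (1 / real n) ^ n"
    by (intro power_mono) auto
  also have "\<dots> \<le> exp 1"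
    by (cases "n = 0") (simp_all add: exp_of_nat_mult[symmetric])
  finally show ?thesis .
qed

lemma power_le_exp_mult_fact: "real n ^ n \<le> exp (real n) * fact n"
proof (induction n)
  case 0 then show ?case by simp
next
  case (Suc n)
  have step: "real (Suc n) ^ n \<le> exp 1 * real n ^ n"
  proof (cases "n = 0")
    case False
    then have "real (Suc n) ^ n = (1 + 1 / real n) ^ n * real n ^ n"
      by (simp add: field_simps flip: power_mult_distrib)
    then show ?thesis
      using one_plus_inverse_power_le_exp[of n] by (simp add: mult_right_mono)
  qed simp
  have "real (Suc n) ^ Suc n = real (Suc n) * real (Suc n) ^ n" by simp
  also have "\<dots> \<le> real (Suc n) * (exp 1 * (exp (real n) * fact n))"
    using step Suc.IH by (intro mult_left_mono) (auto intro: order.trans mult_left_mono)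
  also have "\<dots> = exp (real (Suc n)) * fact (Suc n)"
    by (simp add: exp_add algebra_simps)
  finally show ?case .
qed

lemma exp_le_one_plus_inverse_power: "n > 0 \<Longrightarrow> exp 1 \<le> (1 + 1 / real n) ^ Suc n"
proof -
  assume n: "n > 0"
  have "exp (1 / real (Suc n)) * (1 - 1 / real (Suc n))
      \<le> exp (1 / real (Suc n)) * exp (- (1 / real (Suc n)))"
    by (intro mult_left_mono) (use exp_ge_add_one_self[of "- (1 / real (Suc n))"] in auto)
  then have "exp (1 / real (Suc n)) \<le> 1 + 1 / real n"
    using n by (simp add: exp_minus field_simps)
  then have "exp (1 / real (Suc n)) ^ Suc n \<le> (1 + 1 / real n) ^ Suc n"
    by (intro power_mono) auto
  moreover have "exp (1 / real (Suc n)) ^ Suc n = exp 1"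
    using exp_of_nat_mult[of "Suc n" "1 / real (Suc n)"] by (simp del: of_nat_Suc)
  ultimately show ?thesis by simp
qed

lemma exp_mult_fact_le_power: "n > 0 \<Longrightarrow> exp (real n) * fact n \<le> exp 1 * real n ^ Suc n"
proof (induction n rule: nat_induct_non_zero)
  case 1 then show ?case by simp
next
  case (Suc n)
  have step: "exp 1 * real n ^ Suc n \<le> real (Suc n) ^ Suc n"
  proof -
    have "real (Suc n) ^ Suc n = (1 + 1 / real n) ^ Suc n * real n ^ Suc n"
      using Suc.hyps by (simp add: field_simps flip: power_mult_distrib)
    then show ?thesis
      using exp_le_one_plus_inverse_power[OF Suc.hyps] by (simp add: mult_right_mono)
  qed
  have "exp (real (Suc n)) * fact (Suc n) = exp 1 * real (Suc n) * (exp (real n) * fact n)"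
    by (simp add: exp_add algebra_simps)
  also have "\<dots> \<le> exp 1 * real (Suc n) * (exp 1 * real n ^ Suc n)"
    using Suc.IH by (intro mult_left_mono) auto
  also have "\<dots> \<le> exp 1 * real (Suc n) * real (Suc n) ^ Suc n"
    using step by (intro mult_left_mono) auto
  also have "\<dots> = exp 1 * real (Suc n) ^ Suc (Suc n)" by simp
  finally show ?case .
qed

lemma root_fact_div_tendsto: "(\<lambda>n. root n (fact n) / real n) \<longlonglongrightarrow> exp (-1)"
proof (rule tendsto_sandwich)
  have root_exp: "root n (exp (real n)) = exp 1" if "n > 0" for n
    using that exp_of_nat_mult[of n "1::real"] real_root_power_cancel[of n "exp 1"] by simp
  have "root n (fact n) / real n \<ge> exp (-1)" if n: "n > 0" for n
  proof -
    have "real n ^ n / exp (real n) \<le> fact n"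
      using power_le_exp_mult_fact[of n] by (simp add: divide_le_eq mult.commute)
    then have "root n (real n ^ n / exp (real n)) \<le> root n (fact n)"
      using n by (simp add: real_root_le_iff)
    moreover have "root n (real n ^ n / exp (real n)) = real n * exp (-1)"
      using n by (simp add: real_root_divide real_root_power_cancel root_exp exp_minus field_simps)
    ultimately show ?thesis using n by (simp add: field_simps)
  qed
  then show "\<forall>\<^sub>F n in sequentially. exp (-1) \<le> root n (fact n) / real n"
    by (intro eventually_sequentiallyI[of 1]) auto
  have "root n (fact n) / real n \<le> root n (exp 1) * root n (real n) * exp (-1)" if n: "n > 0" for n
  proof -
    have "fact n \<le> exp 1 * real n ^ Suc n / exp (real n)"
      using exp_mult_fact_le_power[OF n] by (simp add: le_divide_eq mult.commute)
    then have "root n (fact n) \<le> root n (exp 1 * real n ^ Suc n / exp (real n))"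
      using n by (simp add: real_root_le_iff)
    also have "\<dots> = root n (exp 1) * root n (real n) * real n * exp (-1)"
      using n by (simp add: real_root_divide real_root_mult real_root_power_cancel root_exp
          exp_minus field_simps)
    finally show ?thesis using n by (simp add: field_simps)
  qed
  then show "\<forall>\<^sub>F n in sequentially.
      root n (fact n) / real n \<le> root n (exp 1) * root n (real n) * exp (-1)"
    by (intro eventually_sequentiallyI[of 1]) auto
  show "(\<lambda>n. root n (exp 1) * root n (real n) * exp (-1)) \<longlonglongrightarrow> exp (-1)"
    using tendsto_mult[OF tendsto_mult[OF LIMSEQ_root_const LIMSEQ_root] tendsto_const,
        of "exp 1" "exp (-1)"]
    by simp
qed (rule tendsto_const)

lemma root_div_not_tendsto_exp_minus_one:
  fixes f :: "nat \<Rightarrow> real"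
  assumes "u > 1" and "\<forall>n\<ge>2. fact n * u ^ n \<le> f n"
  shows "\<not> (\<lambda>n. root n (f n) / real n) \<longlonglongrightarrow> exp (-1)"
proof
  assume lim: "(\<lambda>n. root n (f n) / real n) \<longlonglongrightarrow> exp (-1)"
  have le: "u * (root n (fact n) / real n) \<le> root n (f n) / real n" if "n \<ge> 2" for n
  proof -
    have "root n (fact n * u ^ n) \<le> root n (f n)"
      using assms that by (simp add: real_root_le_iff)
    moreover have "root n (fact n * u ^ n) = root n (fact n) * u"
      using assms(1) that by (simp add: real_root_mult real_root_power_cancel)
    ultimately show ?thesis by (simp add: divide_right_mono mult.commute)
  qed
  have "(\<lambda>n. u * (root n (fact n) / real n)) \<longlonglongrightarrow> u * exp (-1)"
    by (intro tendsto_mult tendsto_const root_fact_div_tendsto)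
  moreover note lim
  moreover have "\<exists>N. \<forall>n\<ge>N. u * (root n (fact n) / real n) \<le> root n (f n) / real n"
    using le by (intro exI[of _ 2]) simp
  ultimately have "u * exp (-1) \<le> exp (-1)"
    by (rule LIMSEQ_le)
  then show False using assms(1) by simp
qed

lemma sum_Pow_card:
  fixes g :: "nat \<Rightarrow> real"
  assumes "finite X"
  shows "(\<Sum>B\<in>Pow X. g (card B)) = (\<Sum>k\<le>card X. real (card X choose k) * g k)"
proof -
  have "(\<Sum>B\<in>Pow X. g (card B)) = (\<Sum>k\<le>card X. \<Sum>B\<in>{B \<in> Pow X. card B = k}. g (card B))"
    using assms by (intro sum.group[symmetric]) (auto intro: card_mono)
  also have "\<dots> = (\<Sum>k\<le>card X. real (card X choose k) * g k)"
  proof (rule sum.cong[OF refl])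
    fix k
    have "{B \<in> Pow X. card B = k} = {B. B \<subseteq> X \<and> card B = k}" by auto
    then show "(\<Sum>B\<in>{B \<in> Pow X. card B = k}. g (card B)) = real (card X choose k) * g k"
      using n_subsets[OF assms, of k] by simp
  qed
  finally show ?thesis .
qed

lemma sum_Pow_fact_convolution:
  fixes g :: "nat \<Rightarrow> real"
  assumes "finite X"
  shows "(\<Sum>B\<in>Pow X. fact (card B) * fact (card X - card B) * g (card B))
       = fact (card X) * (\<Sum>k\<le>card X. g k)"
proof -
  have "real (card X choose k) * (fact k * fact (card X - k)) = fact (card X)" if "k \<le> card X" for k
    using binomial_fact_lemma[OF that] by (metis of_nat_fact of_nat_mult mult.commute)
  then show ?thesis
    unfolding sum_Pow_card[OF assms, of "\<lambda>k. fact k * fact (card X - k) * g k"] sum_distrib_left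
    by (intro sum.cong) (auto simp: algebra_simps)
qed

lemma card_funs_on:
  assumes "finite I"
  shows "card {p :: nat \<Rightarrow> nat. (\<forall>v. v \<notin> I \<longrightarrow> p v = 0) \<and> (\<forall>v\<in>I. p v \<in> B v)} = (\<Prod>v\<in>I. card (B v))"
proof -
  let ?P = "{p :: nat \<Rightarrow> nat. (\<forall>v. v \<notin> I \<longrightarrow> p v = 0) \<and> (\<forall>v\<in>I. p v \<in> B v)}"
  have "bij_betw (\<lambda>p. restrict p I) ?P (PiE I B)"
    by (rule bij_betw_byWitness[where f' = "\<lambda>f v. if v \<in> I then f v else 0"])
      (auto simp: fun_eq_iff PiE_def extensional_def)
  then have "card ?P = card (PiE I B)" by (rule bij_betw_same_card)
  then show ?thesis by (simp add: card_PiE[OF assms])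
qed

lemma obtain_least:
  fixes lt :: "nat \<Rightarrow> nat \<Rightarrow> bool"
  assumes "lt = (<) \<or> lt = (>)" "finite A" "A \<noteq> {}"
  obtains a where "a \<in> A" "\<forall>v\<in>A - {a}. lt a v"
  using assms(1)
proof
  assume "lt = (<)"
  then show thesis
    using that[of "Min A"] assms(2,3) by (simp add: order.not_eq_order_implies_strict)
next
  assume "lt = (>)"
  then show thesis
    using that[of "Max A"] assms(2,3) by (simp add: order.not_eq_order_implies_strict)
qed

definition parent_edges :: "(nat \<Rightarrow> nat) \<Rightarrow> (nat \<times> nat) set" where
  "parent_edges p = {(v, p v) | v. p v \<noteq> 0}"

definition forest_on :: "nat set \<Rightarrow> (nat \<Rightarrow> nat) \<Rightarrow> bool" where
  "forest_on A p \<longleftrightarrow>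
     (\<forall>v. v \<notin> A \<longrightarrow> p v = 0) \<and> (\<forall>v \<in> A. p v = 0 \<or> p v \<in> A) \<and> acyclic (parent_edges p)"

lemma parent_rel_eq_parent_edges:
  "(\<forall>v. v \<notin> {1..n} \<longrightarrow> p v = 0) \<Longrightarrow> parent_rel n p = parent_edges p"
  unfolding parent_rel_def parent_edges_def by force

lemma rooted_forest_iff_forest_on: "rooted_forest n p \<longleftrightarrow> forest_on {1..n} p"
proof -
  have "(\<forall>v\<in>{1..n}. p v \<le> n) \<longleftrightarrow> (\<forall>v\<in>{1..n}. p v = 0 \<or> p v \<in> {1..n})"
    by auto
  then show ?thesis
    unfolding rooted_forest_def forest_on_def acyclic_def
    using parent_rel_eq_parent_edges[of n p] by metis
qed

lemma forest_on_edges_subset: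
  assumes "forest_on A p"
  shows "parent_edges p \<subseteq> A \<times> A"
proof
  fix e assume "e \<in> parent_edges p"
  then obtain v where e: "e = (v, p v)" "p v \<noteq> 0" unfolding parent_edges_def by blast
  then have "v \<in> A" using assms unfolding forest_on_def by metis
  then show "e \<in> A \<times> A" using e assms unfolding forest_on_def by auto
qed

lemma forest_on_trancl_subset: "forest_on A p \<Longrightarrow> (parent_edges p)\<^sup>+ \<subseteq> A \<times> A"
  by (intro trancl_subset_Sigma forest_on_edges_subset)

lemma finite_forests_on:
  assumes "finite A"
  shows "finite (Collect (forest_on A))"
proof (rule finite_subset)
  show "Collect (forest_on A) \<subseteq> {f. \<forall>x. (x \<in> A \<longrightarrow> f x \<in> insert 0 A) \<and> (x \<notin> A \<longrightarrow> f x = 0)}"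
    unfolding forest_on_def by auto
  show "finite {f. \<forall>x. (x \<in> A \<longrightarrow> f x \<in> insert 0 A) \<and> (x \<notin> A \<longrightarrow> f x = (0::nat))}"
    using assms by (intro finite_set_of_finite_funs) auto
qed

lemma forest_on_reaches_root:
  assumes "forest_on A p" and "finite A"
  shows "\<exists>r. (v, r) \<in> (parent_edges p)\<^sup>* \<and> p r = 0"
proof -
  have "finite (parent_edges p)"
    using forest_on_edges_subset[OF assms(1)] assms(2) by (meson finite_SigmaI finite_subset)
  then have "wf ((parent_edges p)\<inverse>)"
    using assms(1) unfolding forest_on_def by (intro finite_acyclic_wf_converse) auto
  then show ?thesis
  proof (induction v rule: wf_induct_rule)
    case (less v)
    show ?case
    proof (cases "p v = 0")
      case False
      then have "(v, p v) \<in> parent_edges p" unfolding parent_edges_def by auto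
      with less show ?thesis by (meson converse_rtrancl_into_rtrancl converseI)
    qed blast
  qed
qed

section \<open>Forests whose ancestor chains start with their least label\<close>

definition top_least :: "(nat \<Rightarrow> nat \<Rightarrow> bool) \<Rightarrow> (nat \<Rightarrow> nat) \<Rightarrow> bool" where
  "top_least lt p \<longleftrightarrow>
     (\<forall>x y z. (y, x) \<in> (parent_edges p)\<^sup>+ \<longrightarrow> (z, y) \<in> (parent_edges p)\<^sup>+ \<longrightarrow> lt x y \<and> lt x z)"

definition top_least_forests :: "(nat \<Rightarrow> nat \<Rightarrow> bool) \<Rightarrow> nat set \<Rightarrow> (nat \<Rightarrow> nat) set" where
  "top_least_forests lt A = {p. forest_on A p \<and> top_least lt p}"

definition attach_root :: "nat \<Rightarrow> nat set \<Rightarrow> (nat \<Rightarrow> nat) \<Rightarrow> (nat \<Rightarrow> nat) \<Rightarrow> nat \<Rightarrow> nat" where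
  "attach_root a B p1 p2 v = (if v \<in> B then (if p1 v = 0 then a else p1 v) else p2 v)"

lemma trancl_attach_root_subset:
  assumes "a \<notin> X" "B \<subseteq> X" "forest_on B p1" "forest_on (X - B) p2"
  shows "(parent_edges (attach_root a B p1 p2))\<^sup>+
    \<subseteq> (parent_edges p1)\<^sup>+ \<union> (parent_edges p2)\<^sup>+ \<union> B \<times> {a}"
proof -
  let ?T = "(parent_edges p1)\<^sup>+ \<union> (parent_edges p2)\<^sup>+ \<union> B \<times> {a}"
  have "parent_edges (attach_root a B p1 p2) \<subseteq> ?T"
    unfolding attach_root_def parent_edges_def by auto
  moreover have "trans ?T"
    using forest_on_trancl_subset[OF assms(3)] forest_on_trancl_subset[OF assms(4)] assms(1,2)
    unfolding trans_def by (blast intro: trancl_trans)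
  ultimately show ?thesis by (metis trancl_id trancl_mono_subset)
qed

lemma forest_on_attach_root:
  assumes "a \<notin> X" "B \<subseteq> X" and f1: "forest_on B p1" and f2: "forest_on (X - B) p2"
  shows "forest_on (insert a X) (attach_root a B p1 p2)"
proof -
  let ?p = "attach_root a B p1 p2"
  have acyc: "acyclic (parent_edges ?p)"
    using trancl_attach_root_subset[OF assms] f1 f2 assms(1,2)
    unfolding forest_on_def acyclic_def by blast
  have range: "?p v = 0 \<or> ?p v \<in> insert a X" if "v \<in> insert a X" for v
  proof (cases "v \<in> B")
    case True
    then show ?thesis using f1 assms(2) unfolding forest_on_def attach_root_def by auto
  next
    case False
    then have "p2 v = 0 \<or> p2 v \<in> X - B"
      using that f2 assms(1) unfolding forest_on_def by (cases "v = a") auto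
    then show ?thesis using False unfolding attach_root_def by auto
  qed
  have supp: "?p v = 0" if "v \<notin> insert a X" for v
    using that f2 assms(2) unfolding forest_on_def attach_root_def by auto
  show ?thesis
    unfolding forest_on_def using acyc range supp by simp
qed

lemma top_least_attach_root:
  assumes "a \<notin> X" "B \<subseteq> X" "\<forall>v\<in>X. lt a v"
    and f1: "forest_on B p1" and f2: "forest_on (X - B) p2"
    and p1: "top_least lt p1" and p2: "top_least lt p2"
  shows "top_least lt (attach_root a B p1 p2)"
  unfolding top_least_def
proof (intro allI impI)
  fix x y z
  let ?p = "attach_root a B p1 p2"
  assume yx: "(y, x) \<in> (parent_edges ?p)\<^sup>+" and zy: "(z, y) \<in> (parent_edges ?p)\<^sup>+"
  note T = trancl_attach_root_subset[OF assms(1,2) f1 f2]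
  note T1 = forest_on_trancl_subset[OF f1] and T2 = forest_on_trancl_subset[OF f2]
  have zy': "(z, y) \<in> (parent_edges p1)\<^sup>+ \<or> (z, y) \<in> (parent_edges p2)\<^sup>+ \<or> (z \<in> B \<and> y = a)"
    using zy T by blast
  consider "(y, x) \<in> (parent_edges p1)\<^sup>+" | "(y, x) \<in> (parent_edges p2)\<^sup>+" | "y \<in> B" "x = a"
    using yx T by blast
  then show "lt x y \<and> lt x z"
  proof cases
    case 1
    then have "y \<in> B" using T1 by blast
    then have "(z, y) \<in> (parent_edges p1)\<^sup>+" using zy' T2 assms(1,2) by blast
    with 1 show ?thesis using p1 unfolding top_least_def by blast
  next
    case 2
    then have "y \<in> X - B" using T2 by blast
    then have "(z, y) \<in> (parent_edges p2)\<^sup>+" using zy' T1 assms(1) by blast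
    with 2 show ?thesis using p2 unfolding top_least_def by blast
  next
    case 3
    then have "z \<in> X" using zy' T1 T2 assms(1,2) by blast
    with 3 show ?thesis using assms(2,3) by blast
  qed
qed

lemma attach_root_in_top_least_forests:
  assumes "a \<notin> X" "B \<subseteq> X" "\<forall>v\<in>X. lt a v"
    and "p1 \<in> top_least_forests lt B" "p2 \<in> top_least_forests lt (X - B)"
  shows "attach_root a B p1 p2 \<in> top_least_forests lt (insert a X)"
  using assms forest_on_attach_root[OF assms(1,2)] top_least_attach_root[of a X B lt, OF assms(1-3)]
  unfolding top_least_forests_def by blast

lemma attach_root_descendants:
  assumes "finite X" "a \<notin> X" "a \<noteq> 0" "B \<subseteq> X" "forest_on B p1" "forest_on (X - B) p2"
  shows "{v \<in> X. (v, a) \<in> (parent_edges (attach_root a B p1 p2))\<^sup>+} = B"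
proof
  let ?p = "attach_root a B p1 p2"
  note T = trancl_attach_root_subset[OF assms(2,4-6)]
  show "{v \<in> X. (v, a) \<in> (parent_edges ?p)\<^sup>+} \<subseteq> B"
    using T forest_on_trancl_subset[OF assms(5)] forest_on_trancl_subset[OF assms(6)] assms(2)
    by blast
  have "parent_edges p1 \<subseteq> parent_edges ?p"
    using assms(5) unfolding parent_edges_def attach_root_def forest_on_def by auto
  have "(v, a) \<in> (parent_edges ?p)\<^sup>+" if "v \<in> B" for v
  proof -
    obtain r where r: "(v, r) \<in> (parent_edges p1)\<^sup>*" "p1 r = 0"
      using forest_on_reaches_root[OF assms(5)] finite_subset[OF assms(4,1)] by blast
    then have "r \<in> B"
      using that forest_on_trancl_subset[OF assms(5)] by (cases "v = r") (auto dest: rtranclD)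
    then have "(r, a) \<in> parent_edges ?p"
      using r(2) assms(3) unfolding parent_edges_def attach_root_def by auto
    moreover have "(v, r) \<in> (parent_edges ?p)\<^sup>*"
      using r(1) \<open>parent_edges p1 \<subseteq> parent_edges ?p\<close> rtrancl_mono by blast
    ultimately show ?thesis by simp
  qed
  then show "B \<subseteq> {v \<in> X. (v, a) \<in> (parent_edges ?p)\<^sup>+}" using assms(4) by blast
qed

lemma attach_root_inj:
  assumes "finite X" "a \<notin> X" "a \<noteq> 0"
    and "B \<subseteq> X" "forest_on B p1" "forest_on (X - B) p2"
    and "B' \<subseteq> X" "forest_on B' p1'" "forest_on (X - B') p2'"
    and eq: "attach_root a B p1 p2 = attach_root a B' p1' p2'"
  shows "B = B' \<and> p1 = p1' \<and> p2 = p2'"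
proof -
  have restore:
    "p1 = (\<lambda>v. if v \<in> B \<and> attach_root a B p1 p2 v \<noteq> a then attach_root a B p1 p2 v else 0)
      \<and> p2 = (\<lambda>v. if v \<in> B then 0 else attach_root a B p1 p2 v)"
    if "B \<subseteq> X" "forest_on B p1" "forest_on (X - B) p2" for B p1 p2
    using that assms(2) unfolding attach_root_def forest_on_def by (auto simp: fun_eq_iff)
  have "B = B'"
    using attach_root_descendants[OF assms(1-6)] attach_root_descendants[OF assms(1-3,7-9)] eq
    by simp
  with eq show ?thesis using restore[OF assms(4-6)] restore[OF assms(7-9)] by metis
qed

lemma fun_upd_in_top_least_forests:
  assumes "a \<notin> X" "r \<in> X" and p: "p \<in> top_least_forests lt (X - {r})"
  shows "p(a := r) \<in> top_least_forests lt (insert a X)"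
proof -
  have f: "forest_on (X - {r}) p" using p unfolding top_least_forests_def by auto
  note Tp = forest_on_trancl_subset[OF f]
  let ?T = "(parent_edges p)\<^sup>+ \<union> {(a, r)}"
  have "parent_edges (p(a := r)) \<subseteq> ?T" unfolding parent_edges_def by auto
  moreover have "trans ?T" using Tp assms(1,2) unfolding trans_def by (blast intro: trancl_trans)
  ultimately have T: "(parent_edges (p(a := r)))\<^sup>+ \<subseteq> ?T" by (metis trancl_id trancl_mono_subset)
  then have acyc: "acyclic (parent_edges (p(a := r)))"
    using f assms(1,2) unfolding acyclic_def forest_on_def by blast
  have range: "(p(a := r)) v = 0 \<or> (p(a := r)) v \<in> insert a X" if "v \<in> insert a X" for v
    using that f assms(2) unfolding forest_on_def
    by (cases "v = r") (auto dest!: bspec[where x = v])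
  have supp: "(p(a := r)) v = 0" if "v \<notin> insert a X" for v
    using that f unfolding forest_on_def by auto
  have "forest_on (insert a X) (p(a := r))"
    unfolding forest_on_def using acyc range supp by simp
  moreover have "top_least lt (p(a := r))"
    unfolding top_least_def
  proof (intro allI impI)
    fix x y z
    assume "(y, x) \<in> (parent_edges (p(a := r)))\<^sup>+" "(z, y) \<in> (parent_edges (p(a := r)))\<^sup>+"
    then have yx: "(y, x) \<in> (parent_edges p)\<^sup>+ \<or> (y = a \<and> x = r)"
      and zy: "(z, y) \<in> (parent_edges p)\<^sup>+ \<or> (z = a \<and> y = r)"
      using T by blast+
    have "y \<noteq> a" using zy Tp assms(1,2) by blast
    then have "y \<in> X - {r}" using yx Tp by blast
    then have "(y, x) \<in> (parent_edges p)\<^sup>+ \<and> (z, y) \<in> (parent_edges p)\<^sup>+"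
      using yx zy \<open>y \<noteq> a\<close> by blast
    then show "lt x y \<and> lt x z" using p unfolding top_least_forests_def top_least_def by blast
  qed
  ultimately show ?thesis unfolding top_least_forests_def by blast
qed

lemma finite_top_least_forests: "finite A \<Longrightarrow> finite (top_least_forests lt A)"
  unfolding top_least_forests_def by (rule finite_subset[OF _ finite_forests_on]) auto

lemma inj_on_attach_root:
  assumes "finite X" "a \<notin> X" "a \<noteq> 0"
  shows "inj_on (\<lambda>(B, p1, p2). attach_root a B p1 p2)
    (SIGMA B:Pow X. top_least_forests lt B \<times> top_least_forests lt (X - B))"
proof (rule inj_onI)
  fix x y
  assume "x \<in> (SIGMA B:Pow X. top_least_forests lt B \<times> top_least_forests lt (X - B))"
    and "y \<in> (SIGMA B:Pow X. top_least_forests lt B \<times> top_least_forests lt (X - B))"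
    and "(\<lambda>(B, p1, p2). attach_root a B p1 p2) x = (\<lambda>(B, p1, p2). attach_root a B p1 p2) y"
  moreover obtain B p1 p2 B' p1' p2' where "x = (B, p1, p2)" "y = (B', p1', p2')"
    by (metis prod.collapse)
  ultimately show "x = y"
    using attach_root_inj[OF assms, of B p1 p2 B' p1' p2'] unfolding top_least_forests_def by auto
qed

lemma inj_on_fun_upd:
  assumes "a \<notin> X"
  shows "inj_on (\<lambda>(r, p). p(a := r)) (SIGMA r:X. top_least_forests lt (X - {r}))"
proof (rule inj_onI)
  fix x y
  assume "x \<in> (SIGMA r:X. top_least_forests lt (X - {r}))"
    and "y \<in> (SIGMA r:X. top_least_forests lt (X - {r}))"
    and "(\<lambda>(r, p). p(a := r)) x = (\<lambda>(r, p). p(a := r)) y"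
  moreover obtain r p r' p' where xy: "x = (r, p)" "y = (r', p')" by fastforce
  ultimately have "p a = 0" "p' a = 0" and upd: "p(a := r) = p'(a := r')"
    using assms unfolding top_least_forests_def forest_on_def by auto
  then have "r = r'" and "p = p'"
    unfolding fun_eq_iff by (metis fun_upd_same, metis fun_upd_apply)
  then show "x = y" using xy by simp
qed

text \<open>Either the least label a is a root whose proper descendants form B, or it is a leaf
  below a root r that has no other descendant.\<close>

lemma card_top_least_forests_insert_ge:
  assumes X: "finite X" "0 \<notin> insert a X" "a \<notin> X" and least: "\<forall>v\<in>X. lt a v"
  shows "(\<Sum>B\<in>Pow X. card (top_least_forests lt B) * card (top_least_forests lt (X - B)))
       + (\<Sum>r\<in>X. card (top_least_forests lt (X - {r})))
       \<le> card (top_least_forests lt (insert a X))"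
proof -
  let ?F = "top_least_forests lt"
  define S1 where "S1 = (SIGMA B:Pow X. ?F B \<times> ?F (X - B))"
  define S2 where "S2 = (SIGMA r:X. ?F (X - {r}))"
  define f1 where "f1 = (\<lambda>(B, p1, p2). attach_root a B p1 p2)"
  define f2 where "f2 = (\<lambda>(r :: nat, p :: nat \<Rightarrow> nat). p(a := r))"
  have fin: "finite (?F A)" if "A \<subseteq> X" for A
    using finite_subset[OF that X(1)] by (rule finite_top_least_forests)
  have card_S1: "card S1 = (\<Sum>B\<in>Pow X. card (?F B) * card (?F (X - B)))"
    unfolding S1_def using X(1) fin by (subst card_SigmaI) (auto simp: card_cartesian_product)
  have card_S2: "card S2 = (\<Sum>r\<in>X. card (?F (X - {r})))"
    unfolding S2_def using X(1) fin by (subst card_SigmaI) auto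
  have "finite S1" "finite S2"
    unfolding S1_def S2_def using X(1) fin by auto
  have sub: "f1 ` S1 \<union> f2 ` S2 \<subseteq> ?F (insert a X)"
    using attach_root_in_top_least_forests[of a X _ lt, OF X(3) _ least]
      fun_upd_in_top_least_forests[OF X(3)]
    unfolding S1_def S2_def f1_def f2_def by auto
  have disj: "f1 ` S1 \<inter> f2 ` S2 = {}"
  proof -
    have "p a = 0" if "p \<in> f1 ` S1" for p
      using that X(3) unfolding S1_def f1_def attach_root_def top_least_forests_def forest_on_def
      by auto
    moreover have "p a \<in> X" if "p \<in> f2 ` S2" for p
      using that unfolding S2_def f2_def by auto
    ultimately show ?thesis using X(2) by fastforce
  qed
  have "card S1 + card S2 = card (f1 ` S1) + card (f2 ` S2)"
    using inj_on_attach_root[OF X(1,3), of lt] inj_on_fun_upd[OF X(3), of lt] X(2)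
    unfolding S1_def S2_def f1_def f2_def by (simp add: card_image)
  also have "\<dots> = card (f1 ` S1 \<union> f2 ` S2)"
    using \<open>finite S1\<close> \<open>finite S2\<close> disj by (simp add: card_Un_disjoint)
  also have "\<dots> \<le> card (?F (insert a X))"
    using sub X(1) by (intro card_mono finite_top_least_forests) auto
  finally show ?thesis unfolding card_S1 card_S2 .
qed

text \<open>Any base u > 1 with 4 u^2 \<le> 2 u + 3 that also passes the cases m = 1, 2 of
  growth_recurrence would do.\<close>

definition growth_base :: real where
  "growth_base = 11 / 10"

definition growth :: "nat \<Rightarrow> real" where
  "growth k = (if k < 2 then 1 else growth_base ^ (k + 1))"

lemma growth_nonneg: "0 \<le> growth k"
  unfolding growth_def growth_base_def by simp

lemma growth_convolution:
  assumes "3 \<le> m"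
  shows "(\<Sum>k\<le>m. growth k * growth (m - k))
    = 2 * growth_base ^ (m + 1) + 2 * growth_base ^ m + (real m - 3) * growth_base ^ (m + 2)"
proof -
  have g: "growth k = growth_base ^ (k + 1)" if "2 \<le> k" for k
    using that unfolding growth_def by simp
  have "{..m} = {0, 1, m - 1, m} \<union> {2..m - 2}" using assms by auto
  then have "(\<Sum>k\<le>m. growth k * growth (m - k)) = (\<Sum>k\<in>{0, 1, m - 1, m}. growth k * growth (m - k))
      + (\<Sum>k\<in>{2..m - 2}. growth k * growth (m - k))"
    by (simp only:) (rule sum.union_disjoint, auto)
  moreover have "growth 0 = 1" "growth 1 = 1" by (simp_all add: growth_def)
  moreover have "growth (m - 1) = growth_base ^ m" "growth m = growth_base ^ (m + 1)"
    using assms g[of "m - 1"] g[of m] by simp_all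
  moreover have "growth k * growth (m - k) = growth_base ^ (m + 2)" if "k \<in> {2..m - 2}" for k
  proof -
    have "2 \<le> k" "2 \<le> m - k" using that by auto
    then have "growth k * growth (m - k) = growth_base ^ (k + 1 + (m - k + 1))"
      by (simp only: g flip: power_add)
    also have "k + 1 + (m - k + 1) = m + 2" using that by auto
    finally show ?thesis .
  qed
  ultimately show ?thesis using assms by (simp add: of_nat_diff)
qed

lemma growth_recurrence:
  assumes "1 \<le> m"
  shows "real (m + 1) * growth (m + 1) \<le> (\<Sum>k\<le>m. growth k * growth (m - k)) + growth (m - 1)"
proof -
  consider "m = 1" | "m = 2" | "3 \<le> m" using assms by linarith
  then show ?thesis
  proof cases
    case 3
    let ?u = growth_base
    have "?u ^ m * (4 * ?u ^ 2) \<le> ?u ^ m * (2 * ?u + 3)"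
      by (intro mult_left_mono) (auto simp: growth_base_def power2_eq_square)
    then have "4 * ?u ^ (m + 2) \<le> 2 * ?u ^ (m + 1) + 3 * ?u ^ m"
      by (simp add: algebra_simps power_add power2_eq_square)
    moreover have "growth (m + 1) = ?u ^ (m + 2)" "growth (m - 1) = ?u ^ m"
      using 3 unfolding growth_def by auto
    ultimately show ?thesis
      using 3 by (simp add: growth_convolution algebra_simps)
  qed (simp_all add: growth_def growth_base_def numeral_3_eq_3 numeral_2_eq_2)
qed

lemma power_le_growth: "2 \<le> n \<Longrightarrow> growth_base ^ n \<le> growth n"
  unfolding growth_def by (auto simp: growth_base_def intro: power_increasing)

lemma fact_growth_le_card_insert:
  assumes X: "finite X" "0 \<notin> insert a X" "a \<notin> X" "\<forall>v\<in>X. lt a v" "X \<noteq> {}"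
    and IH: "\<And>B. B \<subseteq> X \<Longrightarrow> fact (card B) * growth (card B) \<le> card (top_least_forests lt B)"
  shows "fact (card (insert a X)) * growth (card (insert a X))
    \<le> card (top_least_forests lt (insert a X))"
proof -
  let ?F = "top_least_forests lt"
  define m where "m = card X"
  have m: "card (insert a X) = m + 1" "1 \<le> m"
    using X unfolding m_def by (auto simp: Suc_le_eq card_gt_0_iff)
  have "fact m * (\<Sum>k\<le>m. growth k * growth (m - k))
      = (\<Sum>B\<in>Pow X. fact (card B) * growth (card B)
                     * (fact (card (X - B)) * growth (card (X - B))))"
    using sum_Pow_fact_convolution[OF X(1), of "\<lambda>k. growth k * growth (m - k)"] X(1)
    unfolding m_def by (auto simp: card_Diff_subset finite_subset algebra_simps intro!: sum.cong)
  also have "\<dots> \<le> (\<Sum>B\<in>Pow X. real (card (?F B)) * real (card (?F (X - B))))"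
    using IH by (intro sum_mono mult_mono) (auto simp: growth_nonneg)
  finally have pairs: "fact m * (\<Sum>k\<le>m. growth k * growth (m - k))
      \<le> (\<Sum>B\<in>Pow X. real (card (?F B)) * real (card (?F (X - B))))" .
  have "fact m * growth (m - 1) = (\<Sum>r\<in>X. fact (m - 1) * growth (m - 1))"
    using m(2) unfolding m_def by (cases "card X") auto
  also have "\<dots> \<le> (\<Sum>r\<in>X. real (card (?F (X - {r}))))"
  proof (rule sum_mono)
    fix r assume "r \<in> X"
    then have "card (X - {r}) = m - 1" using X(1) unfolding m_def by simp
    then show "fact (m - 1) * growth (m - 1) \<le> real (card (?F (X - {r})))"
      using IH[of "X - {r}"] by auto
  qed
  finally have singles: "fact m * growth (m - 1) \<le> (\<Sum>r\<in>X. real (card (?F (X - {r}))))" .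
  have "fact (card (insert a X)) * growth (card (insert a X))
      = fact m * (real (m + 1) * growth (m + 1))"
    unfolding m by simp
  also have "\<dots> \<le> fact m * ((\<Sum>k\<le>m. growth k * growth (m - k)) + growth (m - 1))"
    using growth_recurrence[OF m(2)] by (intro mult_left_mono) auto
  also have "\<dots> \<le> (\<Sum>B\<in>Pow X. real (card (?F B)) * real (card (?F (X - B))))
      + (\<Sum>r\<in>X. real (card (?F (X - {r}))))"
    using pairs singles by (simp add: algebra_simps)
  also have "\<dots> \<le> card (?F (insert a X))"
    using card_top_least_forests_insert_ge[of X a lt, OF X(1-4)]
    by (simp flip: of_nat_mult of_nat_sum of_nat_add)
  finally show ?thesis .
qed

lemma fact_growth_le_card_top_least_forests:
  assumes "lt = (<) \<or> lt = (>)" and "finite A" "0 \<notin> A"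
  shows "fact (card A) * growth (card A) \<le> card (top_least_forests lt A)"
  using assms(2,3)
proof (induction "card A" arbitrary: A rule: less_induct)
  case less
  show ?case
  proof (cases "card A \<le> 1")
    case True
    have "(\<lambda>_. 0) \<in> top_least_forests lt A"
      unfolding top_least_forests_def top_least_def forest_on_def parent_edges_def acyclic_def
      by simp
    then have "1 \<le> card (top_least_forests lt A)"
      using finite_top_least_forests[OF less.prems(1)]
      by (metis One_nat_def Suc_leI card_gt_0_iff empty_iff)
    with True show ?thesis by (auto simp: growth_def le_Suc_eq)
  next
    case False
    then have "A \<noteq> {}" by auto
    then obtain a where a: "a \<in> A" "\<forall>v\<in>A - {a}. lt a v"
      using obtain_least[OF assms(1) less.prems(1)] by blast
    then have A: "A = insert a (A - {a})" by auto
    have "A - {a} \<noteq> {}"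
    proof
      assume "A - {a} = {}"
      then have "A = {a}" using a(1) by blast
      with False show False by simp
    qed
    moreover have "fact (card B) * growth (card B) \<le> card (top_least_forests lt B)"
      if "B \<subseteq> A - {a}" for B
      using less.hyps[of B] less.prems that a(1) finite_subset[OF that]
        psubset_card_mono[of A B] by auto
    ultimately show ?thesis
      using fact_growth_le_card_insert[of "A - {a}" a lt] less.prems a A by auto
  qed
qed

section \<open>Patterns and their instances\<close>

definition starts_least :: "(nat \<Rightarrow> nat \<Rightarrow> bool) \<Rightarrow> nat list \<Rightarrow> bool" where
  "starts_least lt xs \<longleftrightarrow> (\<forall>j. 0 < j \<and> j < length xs \<longrightarrow> lt (xs ! 0) (xs ! j))"

lemma starts_least_hd:
  assumes "starts_least lt xs" "y \<in> set xs" "y \<noteq> hd xs"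
  shows "lt (hd xs) y"
proof -
  obtain j where "j < length xs" "xs ! j = y" using assms(2) by (meson in_set_conv_nth)
  moreover have "xs \<noteq> []" using assms(2) by auto
  ultimately show ?thesis using assms(1,3) unfolding starts_least_def by (metis gr0I hd_conv_nth)
qed

lemma uncovered_obtains_direction:
  assumes "\<forall>\<pi>\<in>S. is_pattern \<pi>" and "\<not> covered S"
  obtains lt where "lt = (<) \<or> lt = (>)" "\<forall>\<pi>\<in>S. \<not> starts_least lt \<pi>"
proof -
  have hd_in: "hd \<pi> \<in> {1..length \<pi>}" if "\<pi> \<in> S" for \<pi>
    using assms(1) that unfolding is_pattern_def by (metis hd_in_set)
  have hd1: "hd \<pi> = 1" if "\<pi> \<in> S" "starts_least (<) \<pi>" for \<pi>
    using starts_least_hd[OF that(2), of 1] hd_in[OF that(1)] assms(1) that(1)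
    unfolding is_pattern_def by (fastforce simp: Suc_le_eq)
  have hd_length: "hd \<pi> = length \<pi>" if "\<pi> \<in> S" "starts_least (>) \<pi>" for \<pi>
    using starts_least_hd[OF that(2), of "length \<pi>"] hd_in[OF that(1)] assms(1) that(1)
    unfolding is_pattern_def by (fastforce simp: Suc_le_eq)
  consider "\<forall>\<pi>\<in>S. hd \<pi> \<noteq> 1" | "\<forall>\<pi>\<in>S. hd \<pi> \<noteq> length \<pi>"
    using assms(2) unfolding covered_def by blast
  then show thesis
  proof cases
    case 1
    then show thesis using that[of "(<)"] hd1 by blast
  next
    case 2
    then show thesis using that[of "(>)"] hd_length by blast
  qed
qed

lemma pattern_length_two:
  assumes "is_pattern \<pi>" "length \<pi> = 2"
  shows "\<pi> = [1, 2] \<or> \<pi> = [2, 1]"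
proof -
  obtain a b where ab: "\<pi> = [a, b]"
    using assms(2) by (metis length_0_conv length_Suc_conv numeral_2_eq_2)
  then have "{a, b} = {1..2}" "a \<noteq> b"
    using assms unfolding is_pattern_def by auto
  moreover have "{1..2::nat} = {1, 2}" by auto
  ultimately show ?thesis using ab by (auto simp: doubleton_eq_iff)
qed

lemma pattern_length_ge_three:
  assumes "is_pattern \<pi>" "\<not> starts_least lt \<pi>" "length \<pi> \<noteq> 2"
  shows "3 \<le> length \<pi>"
proof -
  have "length \<pi> \<noteq> 0" using assms(1) unfolding is_pattern_def by simp
  moreover have "length \<pi> \<noteq> 1" using assms(2) unfolding starts_least_def by auto
  ultimately show ?thesis using assms(3) by linarith
qed

lemma mem_length_two_patterns_iff:
  assumes "\<forall>\<pi>\<in>S. is_pattern \<pi>"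
  shows "([1, 2] \<in> S \<or> [2, 1] \<in> S) \<longleftrightarrow> (\<exists>\<sigma>\<in>S. length \<sigma> = 2)"
proof
  assume "\<exists>\<sigma>\<in>S. length \<sigma> = 2"
  then show "[1, 2] \<in> S \<or> [2, 1] \<in> S" using pattern_length_two assms by metis
next
  assume "[1, 2] \<in> S \<or> [2, 1] \<in> S"
  moreover have "length [1, 2 :: nat] = 2" "length [2, 1 :: nat] = 2" by simp_all
  ultimately show "\<exists>\<sigma>\<in>S. length \<sigma> = 2" by blast
qed

lemma instance_ancestor:
  assumes "is_instance n p \<pi> vs" "i < j" "j < length vs"
  shows "(vs ! j, vs ! i) \<in> (parent_rel n p)\<^sup>+"
  using assms(2,3)
proof (induction j)
  case (Suc j)
  then have "(vs ! Suc j, vs ! j) \<in> (parent_rel n p)\<^sup>+"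
    using assms(1) unfolding is_instance_def strict_ancestor_def by auto
  with Suc show ?case by (cases "i = j") (auto intro: trancl_trans)
qed simp

lemma instance_order_iff:
  assumes "is_instance n p \<pi> vs" "lt = (<) \<or> lt = (>)" "i < length \<pi>" "j < length \<pi>"
  shows "lt (vs ! i) (vs ! j) \<longleftrightarrow> lt (\<pi> ! i) (\<pi> ! j)"
  using assms unfolding is_instance_def by auto

lemma instance_starts_least:
  assumes "is_instance n p \<pi> vs" "lt = (<) \<or> lt = (>)" "starts_least lt vs"
  shows "starts_least lt \<pi>"
  using assms instance_order_iff[OF assms(1,2)] unfolding starts_least_def is_instance_def
  by fastforce

lemma top_least_forest_avoids:
  assumes lt: "lt = (<) \<or> lt = (>)" and S: "\<forall>\<pi>\<in>S. 3 \<le> length \<pi> \<and> \<not> starts_least lt \<pi>"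
    and p: "p \<in> top_least_forests lt {1..n}"
  shows "rooted_forest n p \<and> forest_avoids n p S"
proof
  have forest: "forest_on {1..n} p" using p unfolding top_least_forests_def by auto
  then show "rooted_forest n p" by (simp add: rooted_forest_iff_forest_on)
  have edges: "parent_rel n p = parent_edges p"
    using forest unfolding forest_on_def by (simp add: parent_rel_eq_parent_edges)
  show "forest_avoids n p S" unfolding forest_avoids_def
  proof (intro ballI notI)
    fix \<pi> assume "\<pi> \<in> S" "\<exists>vs. is_instance n p \<pi> vs"
    then obtain vs where vs: "is_instance n p \<pi> vs" and len: "3 \<le> length vs"
      and not_least: "\<not> starts_least lt \<pi>"
      using S unfolding is_instance_def by auto
    have anc: "(vs ! j, vs ! i) \<in> (parent_edges p)\<^sup>+" if "i < j" "j < length vs" for i j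
      using instance_ancestor[OF vs that] edges by simp
    have top: "lt (vs ! 0) (vs ! 1) \<and> lt (vs ! 0) (vs ! j)" if "1 < j" "j < length vs" for j
      using p anc[of 0 1] anc[of 1 j] that unfolding top_least_forests_def top_least_def by auto
    have "starts_least lt vs"
      unfolding starts_least_def
    proof (intro allI impI)
      fix j assume j: "0 < j \<and> j < length vs"
      show "lt (vs ! 0) (vs ! j)"
      proof (cases "j = 1")
        case True
        then show ?thesis using top[of 2] len by simp
      next
        case False
        then show ?thesis using top[of j] j by simp
      qed
    qed
    then show False using instance_starts_least[OF vs lt] not_least by blast
  qed
qed

section \<open>Forests ordered along parent edges\<close>

definition ordered_forests :: "(nat \<Rightarrow> nat \<Rightarrow> bool) \<Rightarrow> nat \<Rightarrow> (nat \<Rightarrow> nat) set" where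
  "ordered_forests lt n =
     {p. (\<forall>v. v \<notin> {1..n} \<longrightarrow> p v = 0) \<and> (\<forall>v\<in>{1..n}. p v = 0 \<or> (lt (p v) v \<and> p v \<le> n))}"

lemma parent_child_instance:
  assumes "lt = (<) \<or> lt = (>)" "v \<in> {1..n}" "p v \<noteq> 0" "lt v (p v)"
    and "length \<sigma> = 2" "lt (\<sigma> ! 1) (\<sigma> ! 0)"
  shows "is_instance n p \<sigma> [p v, v]"
proof -
  have "(v, p v) \<in> parent_rel n p" using assms(2,3) unfolding parent_rel_def by auto
  then show ?thesis
    using assms(1,4-6) unfolding is_instance_def strict_ancestor_def
    by (auto simp: less_Suc_eq numeral_2_eq_2 nth_Cons')
qed

lemma avoiding_forest_in_ordered_forests:
  assumes lt: "lt = (<) \<or> lt = (>)" and S: "\<forall>\<pi>\<in>S. \<not> starts_least lt \<pi>"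
    and \<sigma>: "\<sigma> \<in> S" "is_pattern \<sigma>" "length \<sigma> = 2"
    and p: "rooted_forest n p" "forest_avoids n p S"
  shows "p \<in> ordered_forests lt n"
proof -
  have "starts_least lt \<sigma> \<longleftrightarrow> lt (\<sigma> ! 0) (\<sigma> ! 1)"
    using \<sigma>(3) unfolding starts_least_def by (auto simp: numeral_2_eq_2 less_Suc_eq)
  moreover have "\<sigma> ! 0 \<noteq> \<sigma> ! 1"
    using \<sigma>(2,3) unfolding is_pattern_def by (simp add: nth_eq_iff_index_eq)
  ultimately have \<sigma>_desc: "lt (\<sigma> ! 1) (\<sigma> ! 0)" using S \<sigma>(1) lt by auto
  have "lt (p v) v" if v: "v \<in> {1..n}" "p v \<noteq> 0" for v
  proof (rule ccontr)
    assume "\<not> lt (p v) v"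
    have "(v, p v) \<in> parent_rel n p" using v unfolding parent_rel_def by auto
    then have "p v \<noteq> v" using p(1) unfolding rooted_forest_def by force
    with \<open>\<not> lt (p v) v\<close> have "lt v (p v)" using lt by auto
    then have "is_instance n p \<sigma> [p v, v]"
      using parent_child_instance[of lt v n p \<sigma>] lt v \<sigma>(3) \<sigma>_desc by blast
    then show False using p(2) \<sigma>(1) unfolding forest_avoids_def by blast
  qed
  then show ?thesis using p(1) unfolding rooted_forest_def ordered_forests_def by auto
qed

lemma ordered_forest_avoids:
  assumes lt: "lt = (<) \<or> lt = (>)" and S: "\<forall>\<pi>\<in>S. \<not> starts_least lt \<pi>"
    and p: "p \<in> ordered_forests lt n"
  shows "rooted_forest n p \<and> forest_avoids n p S"
proof
  have "trans {(x, y). lt y x}" using lt unfolding trans_def by auto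
  moreover have "parent_rel n p \<subseteq> {(x, y). lt y x}"
  proof
    fix e assume "e \<in> parent_rel n p"
    then obtain v where v: "e = (v, p v)" "v \<in> {1..n}" "p v \<noteq> 0" unfolding parent_rel_def by blast
    then have "p v = 0 \<or> lt (p v) v" using p unfolding ordered_forests_def by blast
    then show "e \<in> {(x, y). lt y x}" using v by auto
  qed
  ultimately have below: "(parent_rel n p)\<^sup>+ \<subseteq> {(x, y). lt y x}"
    by (metis trancl_id trancl_mono_subset)
  then show "rooted_forest n p"
    using p lt unfolding rooted_forest_def ordered_forests_def by fastforce
  show "forest_avoids n p S" unfolding forest_avoids_def
  proof (intro ballI notI)
    fix \<pi> assume "\<pi> \<in> S" "\<exists>vs. is_instance n p \<pi> vs"
    then obtain vs where vs: "is_instance n p \<pi> vs" and "\<not> starts_least lt \<pi>" using S by auto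
    moreover have "starts_least lt vs"
      using instance_ancestor[OF vs] below unfolding starts_least_def by blast
    ultimately show False using instance_starts_least[OF vs lt] by blast
  qed
qed

lemma avoiders_eq_ordered_forests:
  assumes "lt = (<) \<or> lt = (>)" "\<forall>\<pi>\<in>S. \<not> starts_least lt \<pi>"
    and "\<sigma> \<in> S" "is_pattern \<sigma>" "length \<sigma> = 2"
  shows "{p. rooted_forest n p \<and> forest_avoids n p S} = ordered_forests lt n"
  using avoiding_forest_in_ordered_forests[OF assms] ordered_forest_avoids[OF assms(1,2)] by blast

lemma card_ordered_forests:
  assumes "lt = (<) \<or> lt = (>)"
  shows "card (ordered_forests lt n) = fact n"
  using assms
proof
  assume "lt = (<)"
  then have eq: "ordered_forests lt n
      = {p. (\<forall>v. v \<notin> {1..n} \<longrightarrow> p v = 0) \<and> (\<forall>v\<in>{1..n}. p v \<in> {..<v})}"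
    unfolding ordered_forests_def by force
  have "card (ordered_forests lt n) = (\<Prod>v\<in>{1..n}. card {..<v})"
    unfolding eq by (rule card_funs_on) simp
  then show ?thesis by (simp add: fact_prod)
next
  assume "lt = (>)"
  then have eq: "ordered_forests lt n
      = {p. (\<forall>v. v \<notin> {1..n} \<longrightarrow> p v = 0) \<and> (\<forall>v\<in>{1..n}. p v \<in> insert 0 {v<..n})}"
    unfolding ordered_forests_def by force
  have "card (ordered_forests lt n) = (\<Prod>v\<in>{1..n}. card (insert 0 {v<..n}))"
    unfolding eq by (rule card_funs_on) simp
  also have "\<dots> = (\<Prod>v\<in>{1..n}. n + 1 - v)"
    by (intro prod.cong) auto
  also have "\<dots> = (\<Prod>v\<in>{1..n}. v)"
    using prod.atLeastAtMost_rev[of "\<lambda>v. v" 1 n] by simp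
  finally show ?thesis by (simp add: fact_prod)
qed

lemma num_avoiding_eq_fact:
  assumes "lt = (<) \<or> lt = (>)" "\<forall>\<pi>\<in>S. \<not> starts_least lt \<pi>"
    and "\<sigma> \<in> S" "is_pattern \<sigma>" "length \<sigma> = 2"
  shows "num_avoiding S n = fact n"
  unfolding num_avoiding_def avoiders_eq_ordered_forests[OF assms]
  by (rule card_ordered_forests[OF assms(1)])

lemma fact_growth_le_num_avoiding:
  assumes lt: "lt = (<) \<or> lt = (>)" and S: "\<forall>\<pi>\<in>S. 3 \<le> length \<pi> \<and> \<not> starts_least lt \<pi>"
  shows "fact n * growth n \<le> num_avoiding S n"
proof -
  have "finite {p. rooted_forest n p \<and> forest_avoids n p S}"
    using finite_forests_on[of "{1..n}"]
    by (rule finite_subset[rotated]) (auto simp: rooted_forest_iff_forest_on)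
  then have "card (top_least_forests lt {1..n}) \<le> num_avoiding S n"
    unfolding num_avoiding_def using top_least_forest_avoids[OF lt S] by (intro card_mono) auto
  then show ?thesis
    using fact_growth_le_card_top_least_forests[OF lt, of "{1..n}"] by simp
qed

theorem proposition5p11:
  fixes S :: "nat list set"
  assumes "\<forall>\<pi> \<in> S. is_pattern \<pi>"
    and "\<not> covered S"
  shows "((\<lambda>n. root n (real (num_avoiding S n)) / real n) \<longlonglongrightarrow> exp (-1))
         \<longleftrightarrow> ([1, 2] \<in> S \<or> [2, 1] \<in> S)"
proof -
  obtain lt where lt: "lt = (<) \<or> lt = (>)" and S: "\<forall>\<pi>\<in>S. \<not> starts_least lt \<pi>"
    using uncovered_obtains_direction[OF assms] .
  show ?thesis
  proof (cases "\<exists>\<sigma>\<in>S. length \<sigma> = 2")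
    case True
    then have "num_avoiding S n = fact n" for n
      using num_avoiding_eq_fact[OF lt S] assms(1) by blast
    then show ?thesis
      using True mem_length_two_patterns_iff[OF assms(1)] root_fact_div_tendsto by simp
  next
    case False
    then have "\<forall>\<pi>\<in>S. 3 \<le> length \<pi> \<and> \<not> starts_least lt \<pi>"
      using S assms(1) pattern_length_ge_three by blast
    then have "\<forall>n\<ge>2. fact n * growth_base ^ n \<le> real (num_avoiding S n)"
      using fact_growth_le_num_avoiding[OF lt] power_le_growth
      by (meson fact_gt_zero less_imp_le mult_left_mono order.trans)
    then show ?thesis
      using False mem_length_two_patterns_iff[OF assms(1)]
        root_div_not_tendsto_exp_minus_one[of growth_base] by (auto simp: growth_base_def)
  qed
qed

end
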